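(* For all $n\in\mathbb{N}$ and $a,b,c\in\mathbb{C}$ with $b\notin\mathbb{Z}^-$: \begin{align*} \sum_{j=0}^{n}\sum_{i=0}^{j}\frac{\binom{2n+a+2}{i}}{\binom{2n+1}{j}}&=\sum_{k=0}^{n}\frac{n+1}{2k+1}\,\frac{\binom{2k+a}{k}}{\binom{2k}{k}},\\ \sum_{j=0}^{n}\sum_{i=0}^{j}\frac{\binom{2n+3}{i}}{\binom{2n+b+1}{j}}&=\sum_{k=0}^{n}\frac{2n+b+2}{k+b+1}\,\frac{\binom{2k+1}{k}+\frac{4^k b}{k+1}}{\binom{2k+b+2}{k+1}},\\ \sum_{j=0}^{n}\sum_{i=0}^{j}\frac{\binom{n+1}{i}}{\binom{n+b}{j}}\,c^{j-i}&=\sum_{k=0}^{n}\frac{n+b+1}{b+1}\,\frac{(c+1)^k}{\binom{k+b+1}{k}},\\ \sum_{j=0}^{n}\sum_{i=0}^{j}\frac{\binom{n+2}{i}}{\binom{n}{j}}\,c^{j-i+1}&=\sum_{k=0}^{n}\frac{n+1}{k+1}\left((c+1)^{k+1}-1\right). \end{align*}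
   Context: For $x\in\mathbb{C}$, $i\in\mathbb{N}$: $\binom{x}{i}=x(x-1)\cdots(x-i+1)/i!$. $\mathbb{Z}^-=\{-1,-2,\dots\}$. Here $c^0=1$ for every $c$. *)

theory Defs
  imports Complex_Main
begin

definition neg_ints :: "complex set" where
  "neg_ints = {of_int k | k. k \<le> -1}"

end

theory Submission
  imports Defs
begin

text \<open>
  Write A(x, j) for the coefficient of t^j in (1 + t)^x / (1 - c t), so that the inner sums of the
  corollary are A(x, j) / binom(y, j), and let S(x, y, n) be the sum of these over j \<le> n.
  Pascal's rule A(x+1, j+1) = A(x, j+1) + A(x, j), together with its reciprocal counterpart
  (y+2) / ((y+1) binom(y, j)) = 1 / binom(y+1, j) + 1 / binom(y+1, j+1), gives by summation by parts
  S(x+1, y+1, n) = (y+2)/(y+1) S(x, y, n) up to one boundary term. Each identity then follows by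
  induction on n, shifting (x, y) by one step (last two identities) or two steps (first two); only the
  boundary terms need to be evaluated, using A(m, m) = (c+1)^m, \<Sum>k\<le>m. binom(2m+1, k) = 4^m and the
  symmetry of binom(2m+1, -).
\<close>

lemma sum_eq_of_scaled_recurrence:
  fixes S w r u :: "nat \<Rightarrow> 'a::comm_semiring_1"
  assumes "S 0 = w 0 * u 0"
    and "\<And>n. w (Suc n) = r n * w n"
    and "\<And>n. S (Suc n) = r n * S n + w (Suc n) * u (Suc n)"
  shows "S n = (\<Sum>k=0..n. w n * u k)"
proof (induction n)
  case 0
  then show ?case using assms(1) by simp
next
  case (Suc n)
  then show ?case
    using assms(2,3) by (simp add: sum_distrib_left mult.assoc)
qed

definition binomial_geometric_sum :: "'a::field_char_0 \<Rightarrow> 'a \<Rightarrow> nat \<Rightarrow> 'a" where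
  "binomial_geometric_sum c x j = (\<Sum>i=0..j. (x gchoose i) * c^(j-i))"

lemma binomial_geometric_sum_0 [simp]: "binomial_geometric_sum c x 0 = 1"
  by (simp add: binomial_geometric_sum_def)

lemma binomial_geometric_sum_Suc:
  "binomial_geometric_sum c x (Suc j) = c * binomial_geometric_sum c x j + (x gchoose Suc j)"
  by (simp add: binomial_geometric_sum_def sum_distrib_left Suc_diff_le algebra_simps)

lemma binomial_geometric_sum_pascal:
  "binomial_geometric_sum c (x+1) (Suc j) = binomial_geometric_sum c x (Suc j) + binomial_geometric_sum c x j"
proof (induction j)
  case 0
  then show ?case by (simp add: binomial_geometric_sum_Suc)
next
  case (Suc j)
  have "binomial_geometric_sum c (x+1) (Suc (Suc j))
      = c * binomial_geometric_sum c (x+1) (Suc j) + ((x+1) gchoose Suc (Suc j))"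
    by (rule binomial_geometric_sum_Suc)
  also have "\<dots> = c * (binomial_geometric_sum c x (Suc j) + binomial_geometric_sum c x j)
      + (x gchoose Suc j) + (x gchoose Suc (Suc j))"
    using Suc by (simp add: gbinomial_Suc_Suc)
  also have "\<dots> = binomial_geometric_sum c x (Suc (Suc j)) + binomial_geometric_sum c x (Suc j)"
    by (simp add: binomial_geometric_sum_Suc algebra_simps)
  finally show ?case .
qed

lemma binomial_geometric_sum_of_nat_self:
  "binomial_geometric_sum c (of_nat m) m = (c + 1)^m"
  using binomial_ring[of 1 c m]
  by (simp add: binomial_geometric_sum_def binomial_gbinomial atLeast0AtMost add.commute)

lemma binomial_geometric_sum_one: "binomial_geometric_sum 1 x j = (\<Sum>k\<le>j. x gchoose k)"
  by (simp add: binomial_geometric_sum_def atLeast0AtMost)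

lemma binomial_geometric_sum_one_pascal:
  "binomial_geometric_sum 1 (x + 1) m = 2 * binomial_geometric_sum 1 x m - (x gchoose m)"
  by (cases m) (simp_all add: binomial_geometric_sum_pascal binomial_geometric_sum_Suc[of 1 x])

lemma gbinomial_nonzero:
  fixes a :: "'a::field_char_0"
  assumes "\<And>i. i < k \<Longrightarrow> a \<noteq> of_nat i"
  shows "a gchoose k \<noteq> 0"
proof
  assume "a gchoose k = 0"
  then have "(\<Prod>i = 0..<k. a - of_nat i) = 0"
    by (simp add: gbinomial_mult_fact'[symmetric])
  with assms show False by auto
qed

lemma gbinomial_of_nat_nonzero:
  assumes "k \<le> n"
  shows "(of_nat n :: 'a::field_char_0) gchoose k \<noteq> 0"
  using assms by (simp flip: binomial_gbinomial)

lemma gbinomial_absorb_comp_eq: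
  fixes a :: "'a::field_char_0"
  assumes "a - of_nat k \<noteq> 0"
  shows "a gchoose k = a / (a - of_nat k) * ((a - 1) gchoose k)"
  using gbinomial_absorb_comp[of a k] assms by (simp add: field_simps)

lemma inverse_gbinomial_pascal:
  fixes y :: "'a::field_char_0"
  assumes "\<And>i. i \<le> j \<Longrightarrow> y + 1 \<noteq> of_nat i"
  shows "(y + 2) / (y + 1) / (y gchoose j) = 1 / ((y + 1) gchoose j) + 1 / ((y + 1) gchoose Suc j)"
proof -
  define G where "G = (y + 1) gchoose j"
  define H where "H = (y + 1) gchoose Suc j"
  have nz: "y + 1 \<noteq> 0" "G \<noteq> 0" "H \<noteq> 0"
    using assms[of 0] by (auto simp: G_def H_def intro!: gbinomial_nonzero assms)
  have absorb: "of_nat (Suc j) * H = (y + 1) * (y gchoose j)"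
    using gbinomial_absorption[of j "y + 1"] by (simp add: H_def)
  have "(y + 1 - of_nat j) * G = of_nat (Suc j) * H"
    using gbinomial_absorb_comp[of "y + 1" j] absorb by (simp add: G_def)
  then have "(y + 2) * G = of_nat (Suc j) * (G + H)"
    by (simp add: algebra_simps)
  then have "(y + 2) / (of_nat (Suc j) * H) = (G + H) / (G * H)"
    using nz by (simp add: frac_eq_eq del: of_nat_Suc)
  also have "\<dots> = 1 / G + 1 / H"
    using nz by (simp add: field_simps)
  finally show ?thesis
    using absorb by (simp add: G_def H_def)
qed

definition binomial_ratio_sum :: "'a::field_char_0 \<Rightarrow> 'a \<Rightarrow> 'a \<Rightarrow> nat \<Rightarrow> 'a" where
  "binomial_ratio_sum c x y n = (\<Sum>j=0..n. binomial_geometric_sum c x j / (y gchoose j))"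

lemma binomial_ratio_sum_shift:
  assumes "\<And>i. i \<le> n \<Longrightarrow> y + 1 \<noteq> of_nat i"
  shows "binomial_ratio_sum c (x + 1) (y + 1) n
    = (y + 2) / (y + 1) * binomial_ratio_sum c x y n - binomial_geometric_sum c x n / ((y + 1) gchoose Suc n)"
  using assms
proof (induction n)
  case 0
  then have "y + 1 \<noteq> 0"
    using 0[of 0] by simp
  then show ?case
    by (simp add: binomial_ratio_sum_def diff_divide_distrib[symmetric])
next
  case (Suc n)
  let ?A = "binomial_geometric_sum c x" and ?r = "(y + 2) / (y + 1)"
  have "binomial_ratio_sum c (x + 1) (y + 1) (Suc n)
      = ?r * binomial_ratio_sum c x y n - ?A n / ((y + 1) gchoose Suc n)
        + (?A (Suc n) + ?A n) / ((y + 1) gchoose Suc n)"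
    using Suc by (simp add: binomial_ratio_sum_def binomial_geometric_sum_pascal)
  also have "\<dots> = ?r * binomial_ratio_sum c x y n + ?A (Suc n) * (?r / (y gchoose Suc n))
      - ?A (Suc n) / ((y + 1) gchoose Suc (Suc n))"
  proof -
    have "?r / (y gchoose Suc n) = 1 / ((y + 1) gchoose Suc n) + 1 / ((y + 1) gchoose Suc (Suc n))"
      by (rule inverse_gbinomial_pascal[OF Suc.prems])
    then show ?thesis
      by (simp only: add_divide_distrib ring_distribs) simp
  qed
  also have "\<dots> = ?r * binomial_ratio_sum c x y (Suc n) - ?A (Suc n) / ((y + 1) gchoose Suc (Suc n))"
    by (simp add: binomial_ratio_sum_def algebra_simps)
  finally show ?case .
qed

lemma binomial_ratio_sum_shift_Suc:
  assumes "\<And>i. i \<le> n \<Longrightarrow> y + 1 \<noteq> of_nat i"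
  shows "binomial_ratio_sum c (x + 1) (y + 1) (Suc n)
    = (y + 2) / (y + 1) * binomial_ratio_sum c x y n
      + binomial_geometric_sum c x (Suc n) / ((y + 1) gchoose Suc n)"
  using binomial_ratio_sum_shift[where c = c and x = x, OF assms]
  by (simp add: binomial_ratio_sum_def binomial_geometric_sum_pascal add_divide_distrib)

lemma binomial_ratio_sum_shift2:
  assumes "\<And>i. i \<le> Suc n \<Longrightarrow> y + 2 \<noteq> of_nat i"
  shows "binomial_ratio_sum c (x + 2) (y + 2) (Suc n)
    = (y + 3) / (y + 1) * binomial_ratio_sum c x y n
      + ((y + 3) / (y + 2) * (binomial_geometric_sum c x (Suc n) / ((y + 1) gchoose Suc n))
         - binomial_geometric_sum c (x + 1) (Suc n) / ((y + 2) gchoose Suc (Suc n)))"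
proof -
  let ?A = "binomial_geometric_sum c" and ?S = "binomial_ratio_sum c x y n"
  have "y + 2 \<noteq> 0"
    using assms[of 0] by simp
  then have cancel: "(y + 3) / (y + 2) * ((y + 2) / (y + 1) * ?S) = (y + 3) / (y + 1) * ?S"
    by simp
  have shifted: "y + 1 \<noteq> of_nat i" if "i \<le> n" for i
    using assms[of "Suc i"] that by (simp add: algebra_simps)
  have plus_two: "x + 1 + 1 = x + 2" "y + 1 + 1 = y + 2" "y + 1 + 2 = y + 3"
    by simp_all
  have "binomial_ratio_sum c (x + 2) (y + 2) (Suc n)
      = (y + 3) / (y + 2) * binomial_ratio_sum c (x + 1) (y + 1) (Suc n)
        - ?A (x + 1) (Suc n) / ((y + 2) gchoose Suc (Suc n))"
    using binomial_ratio_sum_shift[where c = c and x = "x + 1" and y = "y + 1" and n = "Suc n"] assms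
    unfolding plus_two by blast
  also have "binomial_ratio_sum c (x + 1) (y + 1) (Suc n)
      = (y + 2) / (y + 1) * ?S + ?A x (Suc n) / ((y + 1) gchoose Suc n)"
    by (rule binomial_ratio_sum_shift_Suc[OF shifted])
  finally show ?thesis
    by (simp only: distrib_left cancel add_diff_eq)
qed

lemma double_sum_eq_binomial_ratio_sum:
  "(\<Sum>j=0..n. \<Sum>i=0..j. (x gchoose i) / (y gchoose j) * c^(j-i)) = binomial_ratio_sum c x y n"
  by (simp add: binomial_ratio_sum_def binomial_geometric_sum_def sum_divide_distrib algebra_simps)

lemma double_sum_eq_binomial_ratio_sum_one:
  "(\<Sum>j=0..n. \<Sum>i=0..j. (x gchoose i) / (y gchoose j)) = binomial_ratio_sum 1 x y n"
  using double_sum_eq_binomial_ratio_sum[of x y 1 n] by simp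

lemma double_sum_power_Suc_eq_binomial_ratio_sum:
  "(\<Sum>j=0..n. \<Sum>i=0..j. (x gchoose i) / (y gchoose j) * c^(j-i+1)) = c * binomial_ratio_sum c x y n"
  unfolding double_sum_eq_binomial_ratio_sum[symmetric] sum_distrib_left
  by (simp add: algebra_simps)

lemma not_neg_ints_add_of_nat:
  assumes "b \<notin> neg_ints" "i < m"
  shows "b + of_nat m \<noteq> of_nat i"
proof
  assume "b + of_nat m = of_nat i"
  then have "b = of_int (int i - int m)"
    by (simp add: algebra_simps)
  moreover have "int i - int m \<le> -1"
    using assms(2) by simp
  ultimately have "b \<in> neg_ints"
    unfolding neg_ints_def by blast
  with assms(1) show False ..
qed

lemma binomial_ratio_sum_numerator_n_plus_1_Suc:
  fixes b c :: complex
  assumes "b \<notin> neg_ints"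
  shows "binomial_ratio_sum c (of_nat (Suc n + 1)) (of_nat (Suc n) + b) (Suc n)
    = (of_nat n + b + 2) / (of_nat n + b + 1) * binomial_ratio_sum c (of_nat (n+1)) (of_nat n + b) n
      + (of_nat (Suc n) + b + 1) / (b + 1) * ((c + 1)^(Suc n) / ((of_nat (Suc n) + b + 1) gchoose Suc n))"
proof -
  let ?y = "of_nat n + b"
  have nz: "b + of_nat m \<noteq> of_nat i" if "i < m" for i m
    using not_neg_ints_add_of_nat[OF assms that] .
  have shift_ok: "?y + 1 \<noteq> of_nat i" if "i \<le> n" for i
    using nz[of i "n + 1"] that by (simp add: add_ac)
  have top: "binomial_geometric_sum c (of_nat (n + 1)) (Suc n) = (c + 1)^(Suc n)"
    using binomial_geometric_sum_of_nat_self[of c "n + 1"] by simp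
  have "binomial_ratio_sum c (of_nat (Suc n + 1)) (of_nat (Suc n) + b) (Suc n)
      = binomial_ratio_sum c (of_nat (n + 1) + 1) (?y + 1) (Suc n)"
    by (simp add: add_ac)
  also have "\<dots> = (?y + 2) / (?y + 1) * binomial_ratio_sum c (of_nat (n+1)) ?y n
      + (c + 1)^(Suc n) / ((?y + 1) gchoose Suc n)"
    by (simp only: binomial_ratio_sum_shift_Suc[OF shift_ok] top)
  also have "(c + 1)^(Suc n) / ((?y + 1) gchoose Suc n)
      = (?y + 2) / (b + 1) * ((c + 1)^(Suc n) / ((?y + 2) gchoose Suc n))"
    using gbinomial_absorb_comp_eq[of "?y + 2" "Suc n"] nz[of 0 "n + 2"] nz[of 0 1]
    by (simp add: add_ac)
  finally show ?thesis
    by (simp add: add_ac)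
qed

lemma binomial_ratio_sum_numerator_n_plus_1:
  fixes b c :: complex
  assumes "b \<notin> neg_ints"
  shows "binomial_ratio_sum c (of_nat (n+1)) (of_nat n + b) n
    = (\<Sum>k=0..n. (of_nat n + b + 1) / (b + 1) * ((c + 1)^k / ((of_nat k + b + 1) gchoose k)))"
proof (rule sum_eq_of_scaled_recurrence[where S = "\<lambda>n. binomial_ratio_sum c (of_nat (n+1)) (of_nat n + b) n"
      and w = "\<lambda>n. (of_nat n + b + 1) / (b + 1)" and u = "\<lambda>k. (c + 1)^k / ((of_nat k + b + 1) gchoose k)"
      and r = "\<lambda>n. (of_nat n + b + 2) / (of_nat n + b + 1)"])
  have nz: "b + of_nat m \<noteq> of_nat i" if "i < m" for i m
    using not_neg_ints_add_of_nat[OF assms that] .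
  have "b + 1 \<noteq> 0"
    using nz[of 0 1] by simp
  then show "binomial_ratio_sum c (of_nat (0+1)) (of_nat 0 + b) 0
    = (of_nat 0 + b + 1) / (b + 1) * ((c + 1)^0 / ((of_nat 0 + b + 1) gchoose 0))"
    by (simp add: binomial_ratio_sum_def)
  fix n
  have "of_nat n + b + 1 \<noteq> 0"
    using nz[of 0 "n+1"] by (simp add: add_ac)
  then show "(of_nat (Suc n) + b + 1) / (b + 1)
      = (of_nat n + b + 2) / (of_nat n + b + 1) * ((of_nat n + b + 1) / (b + 1))"
    by (simp add: add_ac)
qed (rule binomial_ratio_sum_numerator_n_plus_1_Suc[OF assms])

lemma binomial_ratio_sum_denominator_n_Suc:
  fixes c :: "'a::field_char_0"
  shows "c * binomial_ratio_sum c (of_nat (Suc n + 2)) (of_nat (Suc n)) (Suc n)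
    = of_nat (n+2) / of_nat (n+1) * (c * binomial_ratio_sum c (of_nat (n+2)) (of_nat n) n)
      + ((c + 1)^(Suc n + 1) - 1)"
proof -
  let ?y = "of_nat n :: 'a"
  have shift_ok: "?y + 1 \<noteq> of_nat i" if "i \<le> n" for i
    using that of_nat_eq_iff[of "Suc n" i, where 'a = 'a] by (simp add: add.commute)
  have diagonal: "(?y + 1) gchoose Suc n = 1"
    using binomial_gbinomial[of "Suc n" "Suc n", where 'a = 'a] by (simp add: add.commute)
  have top: "c * binomial_geometric_sum c (of_nat (n+2)) (Suc n) = (c + 1)^(Suc n + 1) - 1"
    using binomial_geometric_sum_Suc[of c "of_nat (n+2)" "Suc n"] binomial_geometric_sum_of_nat_self[of c "n+2"]
      binomial_gbinomial[of "n+2" "n+2", where 'a = 'a]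
    by (simp add: algebra_simps)
  have "c * binomial_ratio_sum c (of_nat (Suc n + 2)) (of_nat (Suc n)) (Suc n)
      = c * binomial_ratio_sum c (of_nat (n + 2) + 1) (?y + 1) (Suc n)"
    by (simp add: add_ac)
  also have "\<dots> = (?y + 2) / (?y + 1) * (c * binomial_ratio_sum c (of_nat (n+2)) ?y n)
      + c * binomial_geometric_sum c (of_nat (n+2)) (Suc n)"
    by (simp only: binomial_ratio_sum_shift_Suc[OF shift_ok] diagonal)
      (simp add: distrib_left mult.left_commute)
  finally show ?thesis
    unfolding top by (simp add: add_ac)
qed

lemma binomial_ratio_sum_denominator_n:
  fixes c :: "'a::field_char_0"
  shows "c * binomial_ratio_sum c (of_nat (n+2)) (of_nat n) n
    = (\<Sum>k=0..n. of_nat (n+1) / of_nat (k+1) * ((c + 1)^(k+1) - 1))"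
proof -
  have "c * binomial_ratio_sum c (of_nat (n+2)) (of_nat n) n
    = (\<Sum>k=0..n. of_nat (n+1) * (((c + 1)^(k+1) - 1) / of_nat (k+1)))"
  proof (rule sum_eq_of_scaled_recurrence[where S = "\<lambda>n. c * binomial_ratio_sum c (of_nat (n+2)) (of_nat n) n"
        and w = "\<lambda>n. of_nat (n+1)" and u = "\<lambda>k. ((c + 1)^(k+1) - 1) / of_nat (k+1)"
        and r = "\<lambda>n. of_nat (n+2) / of_nat (n+1)"])
    show "c * binomial_ratio_sum c (of_nat (0+2)) (of_nat 0) 0
        = of_nat (0+1) * (((c + 1)^(0+1) - 1) / of_nat (0+1))"
      by (simp add: binomial_ratio_sum_def)
    fix n
    show "of_nat (Suc n + 1) = of_nat (n+2) / of_nat (n+1) * (of_nat (n+1) :: 'a)"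
      by (simp del: of_nat_Suc)
    show "c * binomial_ratio_sum c (of_nat (Suc n + 2)) (of_nat (Suc n)) (Suc n)
        = of_nat (n+2) / of_nat (n+1) * (c * binomial_ratio_sum c (of_nat (n+2)) (of_nat n) n)
          + of_nat (Suc n + 1) * (((c + 1)^(Suc n + 1) - 1) / of_nat (Suc n + 1))"
      by (simp only: binomial_ratio_sum_denominator_n_Suc) (simp del: of_nat_Suc)
  qed
  then show ?thesis
    by simp
qed

lemma odd_denominator_boundary_term:
  fixes x :: "'a::field_char_0"
  shows "of_nat (2*m+2) / of_nat (2*m+1) * (binomial_geometric_sum 1 x m / (of_nat (2*m) gchoose m))
      - binomial_geometric_sum 1 (x + 1) m / (of_nat (2*m+1) gchoose Suc m)
    = of_nat (m+1) * ((x gchoose m) / (of_nat (2*m) gchoose m) / of_nat (2*m+1))"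
proof -
  let ?z = "of_nat (2*m) :: 'a" and ?A = "binomial_geometric_sum 1 x m" and ?H = "of_nat (2*m+1) gchoose Suc m"
  have "(?z + 2) / (?z + 1) / (?z gchoose m) = 1 / ((?z + 1) gchoose m) + 1 / ((?z + 1) gchoose Suc m)"
  proof (rule inverse_gbinomial_pascal)
    fix i assume "i \<le> m"
    then have "of_nat (2*m+1) \<noteq> (of_nat i :: 'a)"
      by (simp only: of_nat_eq_iff)
    then show "?z + 1 \<noteq> of_nat i"
      by (simp add: add.commute)
  qed
  also have "(?z + 1) gchoose m = ?H"
    using gbinomial_of_nat_symmetric[of m "2*m+1", where 'a = 'a] by (simp add: add_ac)
  finally have half: "of_nat (2*m+2) / of_nat (2*m+1) / (?z gchoose m) = 2 / ?H"
    by (simp add: add_ac)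
  have "of_nat (2*m+2) / of_nat (2*m+1) * (?A / (?z gchoose m))
      - binomial_geometric_sum 1 (x + 1) m / ?H = (2 * ?A - binomial_geometric_sum 1 (x + 1) m) / ?H"
    using half by (simp add: divide_inverse ac_simps right_diff_distrib)
  also have "\<dots> = (x gchoose m) / ?H"
    by (simp add: binomial_geometric_sum_one_pascal)
  also have "\<dots> = of_nat (m+1) * ((x gchoose m) / (?z gchoose m) / of_nat (2*m+1))"
  proof -
    have "?H = of_nat (2*m+1) / of_nat (m+1) * (?z gchoose m)"
      using gbinomial_factors[of ?z m] by (simp add: add_ac)
    then show ?thesis
      using gbinomial_of_nat_nonzero[of m "2*m", where 'a = 'a] by (simp add: field_simps)
  qed
  finally show ?thesis .
qed

lemma binomial_ratio_sum_denominator_2n_plus_1_Suc: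
  fixes a :: "'a::field_char_0"
  shows "binomial_ratio_sum 1 (of_nat (2 * Suc n) + a + 2) (of_nat (2 * Suc n + 1)) (Suc n)
    = of_nat (n+2) / of_nat (n+1) * binomial_ratio_sum 1 (of_nat (2*n) + a + 2) (of_nat (2*n+1)) n
      + of_nat (Suc n + 1) * (((of_nat (2 * Suc n) + a) gchoose Suc n) / (of_nat (2 * Suc n) gchoose Suc n)
          / of_nat (2 * Suc n + 1))"
proof -
  let ?x = "of_nat (2*n) + a + 2" and ?y = "of_nat (2*n+1) :: 'a"
  have y: "?y + 1 = of_nat (2 * Suc n)" "?y + 2 = of_nat (2 * Suc n + 1)" "?y + 3 = of_nat (2 * Suc n + 2)"
    by simp_all
  have shift_ok: "?y + 2 \<noteq> of_nat i" if "i \<le> Suc n" for i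
    using that unfolding y(2) of_nat_eq_iff by simp
  have "binomial_ratio_sum 1 (of_nat (2 * Suc n) + a + 2) (of_nat (2 * Suc n + 1)) (Suc n)
      = binomial_ratio_sum 1 (?x + 2) (?y + 2) (Suc n)"
    by (simp add: algebra_simps)
  also have "\<dots> = (?y + 3) / (?y + 1) * binomial_ratio_sum 1 ?x ?y n
      + ((?y + 3) / (?y + 2) * (binomial_geometric_sum 1 ?x (Suc n) / ((?y + 1) gchoose Suc n))
         - binomial_geometric_sum 1 (?x + 1) (Suc n) / ((?y + 2) gchoose Suc (Suc n)))"
    by (rule binomial_ratio_sum_shift2[OF shift_ok])
  also have "\<dots> = of_nat (2 * Suc n + 2) / of_nat (2 * Suc n) * binomial_ratio_sum 1 ?x ?y n
      + of_nat (Suc n + 1) * (((of_nat (2 * Suc n) + a) gchoose Suc n) / (of_nat (2 * Suc n) gchoose Suc n)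
          / of_nat (2 * Suc n + 1))"
    unfolding y odd_denominator_boundary_term by (simp add: algebra_simps)
  also have "of_nat (2 * Suc n + 2) / of_nat (2 * Suc n) = (of_nat (n+2) / of_nat (n+1) :: 'a)"
    using mult_divide_mult_cancel_left[of 2 "of_nat (n+2)" "of_nat (n+1) :: 'a"] by simp
  finally show ?thesis .
qed

lemma binomial_ratio_sum_denominator_2n_plus_1:
  fixes a :: "'a::field_char_0"
  shows "binomial_ratio_sum 1 (of_nat (2*n) + a + 2) (of_nat (2*n+1)) n
    = (\<Sum>k=0..n. of_nat (n+1) / of_nat (2*k+1) * (((of_nat (2*k) + a) gchoose k) / (of_nat (2*k) gchoose k)))"
proof -
  have "binomial_ratio_sum 1 (of_nat (2*n) + a + 2) (of_nat (2*n+1)) n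
    = (\<Sum>k=0..n. of_nat (n+1) * (((of_nat (2*k) + a) gchoose k) / (of_nat (2*k) gchoose k) / of_nat (2*k+1)))"
  proof (rule sum_eq_of_scaled_recurrence[where S = "\<lambda>n. binomial_ratio_sum 1 (of_nat (2*n) + a + 2) (of_nat (2*n+1)) n"
        and w = "\<lambda>n. of_nat (n+1)" and u = "\<lambda>k. ((of_nat (2*k) + a) gchoose k) / (of_nat (2*k) gchoose k) / of_nat (2*k+1)"
        and r = "\<lambda>n. of_nat (n+2) / of_nat (n+1)"])
    show "binomial_ratio_sum 1 (of_nat (2*0) + a + 2) (of_nat (2*0+1)) 0
        = of_nat (0+1) * (((of_nat (2*0) + a) gchoose 0) / (of_nat (2*0) gchoose 0) / of_nat (2*0+1))"
      by (simp add: binomial_ratio_sum_def)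
    show "of_nat (Suc n + 1) = of_nat (n+2) / of_nat (n+1) * (of_nat (n+1) :: 'a)" for n
      by (simp del: of_nat_Suc)
  qed (rule binomial_ratio_sum_denominator_2n_plus_1_Suc)
  then show ?thesis
    by (simp add: mult.commute)
qed

lemma odd_numerator_boundary_term:
  fixes b :: complex
  assumes "b \<notin> neg_ints"
  shows "(of_nat (2*m) + b + 2) / (of_nat (2*m) + b + 1)
        * (binomial_geometric_sum 1 (of_nat (2*m+1)) m / ((of_nat (2*m) + b) gchoose m))
      - binomial_geometric_sum 1 (of_nat (2*m+1) + 1) m / ((of_nat (2*m) + b + 1) gchoose Suc m)
    = (of_nat (2*m) + b + 2)
        * (((of_nat (2*m+1) gchoose m) + 4^m * b / of_nat (m+1)) / ((of_nat (2*m) + b + 2) gchoose (m+1))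
           / (of_nat m + b + 1))"
proof -
  define Y where "Y = of_nat (2*m) + b"
  define G where "G = Y gchoose m"
  define N where "N = (of_nat (m+1) :: complex)"
  define M where "M = of_nat m + b + 1"
  have nz: "b + of_nat k \<noteq> of_nat i" if "i < k" for i k
    using not_neg_ints_add_of_nat[OF assms that] .
  have "G \<noteq> 0"
    unfolding G_def Y_def using nz[of _ "2*m"] by (intro gbinomial_nonzero) (simp add: add.commute)
  moreover have "Y + 1 \<noteq> 0" "Y + 2 \<noteq> 0" "M \<noteq> 0"
    using nz[of 0 "2*m+1"] nz[of 0 "2*m+2"] nz[of 0 "m+1"] by (simp_all add: Y_def M_def add_ac)
  moreover have "N \<noteq> 0"
    unfolding N_def by (simp only: of_nat_eq_0_iff)
  \<comment> \<open>Once \<open>H\<close> and \<open>K\<close> are expressed through \<open>G\<close>, the boundary term is a rational identity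
      that only uses \<open>b = Y + 2 - 2 N\<close>.\<close>
  moreover have "Q / P * (F / G) - (2 * F - D) / (P * G / N)
      = Q * ((D + F * (Q - 2 * N) / N) / (Q * (P * G / N) / M) / M)"
    if "P \<noteq> 0" "Q \<noteq> 0" "G \<noteq> 0" "N \<noteq> 0" "M \<noteq> 0" for P Q G N M F D :: complex
    using that by (simp add: field_simps)
  moreover have "b = (Y + 2) - 2 * N"
    by (simp add: Y_def N_def)
  ultimately have key: "(Y + 2) / (Y + 1) * (F / G) - (2 * F - D) / ((Y + 1) * G / N)
      = (Y + 2) * ((D + F * b / N) / ((Y + 2) * ((Y + 1) * G / N) / M) / M)" for F D
    by simp
  have H: "(Y + 1) gchoose Suc m = (Y + 1) * G / N"
    using gbinomial_factors[of Y m] by (simp add: G_def N_def)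
  have K: "(Y + 2) gchoose (m+1) = (Y + 2) * ((Y + 1) gchoose Suc m) / M"
    using gbinomial_absorb_comp_eq[of "Y + 2" "m+1"] \<open>M \<noteq> 0\<close> by (simp add: Y_def M_def add_ac)
  have F: "binomial_geometric_sum 1 (of_nat (2*m+1)) m = (4::complex)^m"
    using gbinomial_r_part_sum[of m, where 'a = complex]
    by (simp add: binomial_geometric_sum_one power_mult add.commute)
  show ?thesis
    unfolding Y_def[symmetric] G_def[symmetric] N_def[symmetric] M_def[symmetric] K H
      binomial_geometric_sum_one_pascal F
    by (rule key)
qed

lemma binomial_ratio_sum_numerator_2n_plus_3_Suc:
  fixes b :: complex
  assumes "b \<notin> neg_ints"
  shows "binomial_ratio_sum 1 (of_nat (2 * Suc n + 3)) (of_nat (2 * Suc n) + b + 1) (Suc n)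
    = (of_nat (2 * Suc n) + b + 2) / (of_nat (2 * Suc n) + b)
        * binomial_ratio_sum 1 (of_nat (2*n+3)) (of_nat (2*n) + b + 1) n
      + (of_nat (2 * Suc n) + b + 2)
        * ((((of_nat (2 * Suc n + 1) gchoose Suc n) + 4^(Suc n) * b / of_nat (Suc n + 1))
            / ((of_nat (2 * Suc n) + b + 2) gchoose (Suc n + 1))) / (of_nat (Suc n) + b + 1))"
proof -
  let ?x = "of_nat (2*n+3) :: complex" and ?y = "of_nat (2*n) + b + 1"
  have y: "?y + 1 = of_nat (2 * Suc n) + b" "?y + 2 = of_nat (2 * Suc n) + b + 1"
      "?y + 3 = of_nat (2 * Suc n) + b + 2" "?x = of_nat (2 * Suc n + 1)"
    by simp_all
  have shift_ok: "?y + 2 \<noteq> of_nat i" if "i \<le> Suc n" for i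
    using not_neg_ints_add_of_nat[OF assms, of i "2*n+3"] that by (simp add: add_ac)
  have "binomial_ratio_sum 1 (of_nat (2 * Suc n + 3)) (of_nat (2 * Suc n) + b + 1) (Suc n)
      = binomial_ratio_sum 1 (?x + 2) (?y + 2) (Suc n)"
    by (simp add: algebra_simps)
  also have "\<dots> = (?y + 3) / (?y + 1) * binomial_ratio_sum 1 ?x ?y n
      + ((?y + 3) / (?y + 2) * (binomial_geometric_sum 1 ?x (Suc n) / ((?y + 1) gchoose Suc n))
         - binomial_geometric_sum 1 (?x + 1) (Suc n) / ((?y + 2) gchoose Suc (Suc n)))"
    by (rule binomial_ratio_sum_shift2[OF shift_ok])
  also have "\<dots> = (of_nat (2 * Suc n) + b + 2) / (of_nat (2 * Suc n) + b) * binomial_ratio_sum 1 ?x ?y n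
      + (of_nat (2 * Suc n) + b + 2)
        * ((((of_nat (2 * Suc n + 1) gchoose Suc n) + 4^(Suc n) * b / of_nat (Suc n + 1))
            / ((of_nat (2 * Suc n) + b + 2) gchoose (Suc n + 1))) / (of_nat (Suc n) + b + 1))"
    unfolding y odd_numerator_boundary_term[OF assms] ..
  finally show ?thesis .
qed

lemma binomial_ratio_sum_numerator_2n_plus_3:
  fixes b :: complex
  assumes "b \<notin> neg_ints"
  shows "binomial_ratio_sum 1 (of_nat (2*n+3)) (of_nat (2*n) + b + 1) n
    = (\<Sum>k=0..n. (of_nat (2*n) + b + 2) / (of_nat k + b + 1)
         * (((of_nat (2*k+1) gchoose k) + 4^k * b / of_nat (k+1)) / ((of_nat (2*k) + b + 2) gchoose (k+1))))"
proof -
  have nz: "b + of_nat k \<noteq> of_nat i" if "i < k" for i k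
    using not_neg_ints_add_of_nat[OF assms that] .
  have "binomial_ratio_sum 1 (of_nat (2*n+3)) (of_nat (2*n) + b + 1) n
    = (\<Sum>k=0..n. (of_nat (2*n) + b + 2)
         * ((((of_nat (2*k+1) gchoose k) + 4^k * b / of_nat (k+1)) / ((of_nat (2*k) + b + 2) gchoose (k+1)))
            / (of_nat k + b + 1)))"
  proof (rule sum_eq_of_scaled_recurrence[where S = "\<lambda>n. binomial_ratio_sum 1 (of_nat (2*n+3)) (of_nat (2*n) + b + 1) n"
        and w = "\<lambda>n. of_nat (2*n) + b + 2"
        and u = "\<lambda>k. (((of_nat (2*k+1) gchoose k) + 4^k * b / of_nat (k+1)) / ((of_nat (2*k) + b + 2) gchoose (k+1)))
                   / (of_nat k + b + 1)"
        and r = "\<lambda>n. (of_nat (2 * Suc n) + b + 2) / (of_nat (2 * Suc n) + b)"])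
    have "b + 1 \<noteq> 0" "b + 2 \<noteq> 0"
      using nz[of 0 1] nz[of 0 2] by simp_all
    then show "binomial_ratio_sum 1 (of_nat (2*0+3)) (of_nat (2*0) + b + 1) 0
        = (of_nat (2*0) + b + 2) * ((((of_nat (2*0+1) gchoose 0) + 4^0 * b / of_nat (0+1))
            / ((of_nat (2*0) + b + 2) gchoose (0+1))) / (of_nat 0 + b + 1))"
      by (simp add: binomial_ratio_sum_def add.commute)
    fix n
    have "of_nat (2 * Suc n) + b \<noteq> 0"
      using nz[of 0 "2 * Suc n"] by (simp add: add.commute)
    moreover have shifted: "of_nat (2*n) + b + 2 = of_nat (2 * Suc n) + b"
      by simp
    ultimately show "of_nat (2 * Suc n) + b + 2
        = (of_nat (2 * Suc n) + b + 2) / (of_nat (2 * Suc n) + b) * (of_nat (2*n) + b + 2)"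
      unfolding shifted by simp
  qed (rule binomial_ratio_sum_numerator_2n_plus_3_Suc[OF assms])
  then show ?thesis
    by (simp add: mult.commute)
qed

theorem corollary1:
  fixes n :: nat and a b c :: complex
  assumes "b \<notin> neg_ints"
  shows "((\<Sum>j=0..n. \<Sum>i=0..j. ((of_nat (2*n) + a + 2) gchoose i) / (of_nat (2*n+1) gchoose j))
           = (\<Sum>k=0..n. of_nat (n+1) / of_nat (2*k+1) * (((of_nat (2*k) + a) gchoose k) / (of_nat (2*k) gchoose k))))
    \<and> ((\<Sum>j=0..n. \<Sum>i=0..j. (of_nat (2*n+3) gchoose i) / ((of_nat (2*n) + b + 1) gchoose j))
           = (\<Sum>k=0..n. (of_nat (2*n) + b + 2) / (of_nat k + b + 1)
                 * (((of_nat (2*k+1) gchoose k) + 4^k * b / of_nat (k+1)) / ((of_nat (2*k) + b + 2) gchoose (k+1)))))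
    \<and> ((\<Sum>j=0..n. \<Sum>i=0..j. (of_nat (n+1) gchoose i) / ((of_nat n + b) gchoose j) * c^(j-i))
           = (\<Sum>k=0..n. (of_nat n + b + 1) / (b + 1) * ((c + 1)^k / ((of_nat k + b + 1) gchoose k))))
    \<and> ((\<Sum>j=0..n. \<Sum>i=0..j. (of_nat (n+2) gchoose i) / (of_nat n gchoose j) * c^(j-i+1))
           = (\<Sum>k=0..n. of_nat (n+1) / of_nat (k+1) * ((c + 1)^(k+1) - 1)))"
  unfolding double_sum_eq_binomial_ratio_sum_one double_sum_eq_binomial_ratio_sum
    double_sum_power_Suc_eq_binomial_ratio_sum
  by (intro conjI binomial_ratio_sum_denominator_2n_plus_1 binomial_ratio_sum_numerator_2n_plus_3[OF assms]
      binomial_ratio_sum_numerator_n_plus_1[OF assms] binomial_ratio_sum_denominator_n)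

end
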